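(* Let $\Gamma$ be a finite metric tree and let $f\colon\Gamma\to[0,\infty)$ be a continuous edge-linear function. Any unimodal decomposition of $f$ can be modified, without changing the number of components, to a unimodal decomposition of $f$ in which every component attains its maximum at a vertex of $\Gamma$.
   Context: A finite metric tree $\Gamma$ is a compact contractible 1-dimensional metric space stratified into finitely many vertices and open edges. A function is edge-linear if its restriction to each edge is affine with respect to the edge's metric. A continuous function $u\colon\Gamma\to[0,\infty)$ with maximal value $M$ is unimodal if its upper excursion sets $u^{-1}([c,\infty))$ are contractible for all $0<c\le M$ (and empty for $c>M$). A unimodal decomposition of $f$ is a finite family of unimodal functions whose pointwise sum is $f$. *)

theory Defs
  imports "HOL-Analysis.Analysis"
begin

text \<open>Each edge is given as a pair
(l, g) where l > 0 is its length and g restricted to the interval from 0 to l is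
an isometric chart of the closed edge with respect to the edge's metric (hence a
homeomorphism of the interval onto the closed edge, i.e. an arc), whose endpoints
are vertices; the open edge is the image of the open interval.\<close>

definition open_edge :: "real \<times> (real \<Rightarrow> 'a) \<Rightarrow> 'a set" where
  "open_edge e = snd e ` {0<..<fst e}"

definition finite_metric_tree ::
  "('a::metric_space) set \<Rightarrow> 'a set \<Rightarrow> (real \<times> (real \<Rightarrow> 'a)) set \<Rightarrow> bool" where
  "finite_metric_tree S V E \<longleftrightarrow>
     compact S \<and> contractible S \<and> finite V \<and> finite E \<and> V \<subseteq> S \<and>
     (\<forall>(l, g) \<in> E. 0 < l \<and> continuous_on {0..l} g \<and> inj_on g {0..l} \<and>
        g ` {0..l} \<subseteq> S \<and> g 0 \<in> V \<and> g l \<in> V \<and> g ` {0<..<l} \<inter> V = {}) \<and>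
     (\<forall>e1 \<in> E. \<forall>e2 \<in> E. e1 \<noteq> e2 \<longrightarrow> open_edge e1 \<inter> open_edge e2 = {}) \<and>
     S = V \<union> (\<Union>e \<in> E. open_edge e)"

definition edge_linear :: "(real \<times> (real \<Rightarrow> 'a)) set \<Rightarrow> ('a \<Rightarrow> real) \<Rightarrow> bool" where
  "edge_linear E f \<longleftrightarrow>
     (\<forall>(l, g) \<in> E. \<exists>a b. \<forall>t \<in> {0..l}. f (g t) = a * t + b)"

definition unimodal :: "('a::metric_space) set \<Rightarrow> ('a \<Rightarrow> real) \<Rightarrow> bool" where
  "unimodal S u \<longleftrightarrow>
     continuous_on S u \<and> (\<forall>x \<in> S. 0 \<le> u x) \<and>
     (\<exists>M. (\<exists>x \<in> S. u x = M) \<and> (\<forall>x \<in> S. u x \<le> M) \<and>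
        (\<forall>c. 0 < c \<and> c \<le> M \<longrightarrow> contractible {x \<in> S. c \<le> u x}) \<and>
        (\<forall>c. M < c \<longrightarrow> {x \<in> S. c \<le> u x} = {}))"

definition unimodal_decomposition ::
  "('a::metric_space) set \<Rightarrow> ('a \<Rightarrow> real) \<Rightarrow> nat \<Rightarrow> (nat \<Rightarrow> 'a \<Rightarrow> real) \<Rightarrow> bool" where
  "unimodal_decomposition S f n us \<longleftrightarrow>
     (\<forall>i < n. unimodal S (us i)) \<and> (\<forall>x \<in> S. f x = (\<Sum>i<n. us i x))"

end

theory Submission
  imports Defs
begin

(* Replace the components, one edge at a time, by the linear interpolation of their values at
   the endpoints of the edge; as f is affine on the edge, the sum is still f.  Removing an
   interior point of an edge disconnects the tree (a continuous logarithm of a map winding once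
   around the circle along the edge witnesses this), so a unimodal function, whose superlevel
   sets are connected, is quasiconcave along each edge.  Hence a superlevel set meets the closed
   edge in a subarc, and passing to the interpolation changes it only by an arc attached at one
   endpoint, which preserves contractibility; a subarc inside the open edge cannot occur, as the
   superlevel set is connected and meets the rest of the tree.  Once every component is affine
   on every edge, its maximum is attained at a vertex. *)

section \<open>Contractible metric spaces\<close>

text \<open>Continuous logarithms are available on contractible subsets of normed spaces; the Kuratowski
  embedding, an isometry into the bounded continuous functions, transfers them to arbitrary
  metric spaces.\<close>

definition kuratowski_embedding :: "'a::metric_space \<Rightarrow> 'a \<Rightarrow> ('a \<Rightarrow>\<^sub>C real)" where
  "kuratowski_embedding a x = Bcontfun (\<lambda>y. dist x y - dist a y)"

lemma abs_dist_diff_le_dist: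
  fixes x x' y :: "'a::metric_space"
  shows "\<bar>dist x y - dist x' y\<bar> \<le> dist x x'"
  using abs_dist_diff_le[of x y x'] by (simp add: dist_commute)

lemma apply_kuratowski_embedding:
  "apply_bcontfun (kuratowski_embedding a x) = (\<lambda>y. dist x y - dist a y)"
proof -
  have "bounded (range (\<lambda>y. dist x y - dist a y))"
    by (auto simp: bounded_iff intro!: exI[of _ "dist x a"] abs_dist_diff_le_dist)
  then have "(\<lambda>y. dist x y - dist a y) \<in> bcontfun"
    unfolding bcontfun_def by (simp add: continuous_on_diff continuous_on_dist)
  then show ?thesis
    unfolding kuratowski_embedding_def by (simp add: Bcontfun_inverse)
qed

lemma dist_kuratowski_embedding:
  "dist (kuratowski_embedding a x) (kuratowski_embedding a x') = dist x x'"
proof (rule antisym)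
  show "dist (kuratowski_embedding a x) (kuratowski_embedding a x') \<le> dist x x'"
    by (rule dist_bound) (simp add: apply_kuratowski_embedding dist_real_def abs_dist_diff_le_dist)
  show "dist x x' \<le> dist (kuratowski_embedding a x) (kuratowski_embedding a x')"
    using dist_bounded[of "kuratowski_embedding a x" x' "kuratowski_embedding a x'"]
    by (simp add: apply_kuratowski_embedding dist_real_def)
qed

lemma continuous_logarithm_on_contractible_metric:
  fixes f :: "'a::metric_space \<Rightarrow> complex"
  assumes "continuous_on S f" "contractible S" "\<And>x. x \<in> S \<Longrightarrow> f x \<noteq> 0"
  obtains g where "continuous_on S g" "\<And>x. x \<in> S \<Longrightarrow> f x = exp (g x)"
proof (cases "S = {}")
  case False
  then obtain a where "a \<in> S" by blast
  define e where "e = kuratowski_embedding a"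
  define h where "h = inv e"
  have dist_e: "dist (e x) (e x') = dist x x'" for x x'
    unfolding e_def by (rule dist_kuratowski_embedding)
  then have "inj e" by (metis injI dist_eq_0_iff)
  then have he: "h (e x) = x" for x
    unfolding h_def by (rule inv_f_f)
  have hom: "homeomorphism S (e ` S) e h"
  proof (rule homeomorphismI)
    show "continuous_on S e"
      unfolding continuous_on_iff by (metis dist_e)
    show "continuous_on (e ` S) h"
      unfolding continuous_on_iff by (metis dist_e he imageE)
  qed (auto simp: he)
  have "homeomorphic_maps (top_of_set S) (top_of_set (e ` S)) e h"
    using hom by (force simp: Pi_iff homeomorphic_maps_def homeomorphism_def)
  then have "contractible (e ` S)"
    using assms(2) homeomorphic_maps_imp_homeomorphic_space homeomorphic_space_contractibility
      contractible_space_top_of_set by metis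
  moreover have "continuous_on (e ` S) (f \<circ> h)"
    using hom assms(1) by (metis continuous_on_compose homeomorphism_def)
  moreover have "(f \<circ> h) y \<noteq> 0" if "y \<in> e ` S" for y
    using that assms(3) he by auto
  ultimately obtain k
    where k: "continuous_on (e ` S) k" "\<And>y. y \<in> e ` S \<Longrightarrow> (f \<circ> h) y = exp (k y)"
    by (metis continuous_logarithm_on_contractible)
  show ?thesis
  proof (rule that)
    show "continuous_on S (k \<circ> e)"
      using hom k(1) continuous_on_compose homeomorphism_def by blast
    show "f x = exp ((k \<circ> e) x)" if "x \<in> S" for x
      using k(2)[of "e x"] that he by simp
  qed
qed auto

lemma contractible_imp_connected_set:
  fixes S :: "'a::topological_space set"
  assumes "contractible S"
  shows "connected S"
proof -
  have "connected_space (top_of_set S)"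
    using assms contractible_space_top_of_set contractible_imp_connected_space by blast
  then have "connectedin euclidean S"
    by (simp add: connectedin_def)
  then show ?thesis
    by simp
qed

section \<open>Quasiconcave functions and linear interpolation on intervals\<close>

definition quasiconcave_on :: "real set \<Rightarrow> (real \<Rightarrow> real) \<Rightarrow> bool" where
  "quasiconcave_on A F \<longleftrightarrow> (\<forall>s\<in>A. \<forall>t\<in>A. \<forall>r\<in>A. s \<le> r \<longrightarrow> r \<le> t \<longrightarrow> min (F s) (F t) \<le> F r)"

lemma quasiconcave_on_cong:
  "(\<And>x. x \<in> A \<Longrightarrow> F x = G x) \<Longrightarrow> quasiconcave_on A F \<longleftrightarrow> quasiconcave_on A G"
  by (simp add: quasiconcave_on_def)

lemma quasiconcave_on_affine: "quasiconcave_on A (\<lambda>\<tau>. \<alpha> * \<tau> + \<beta>)"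
  unfolding quasiconcave_on_def
proof (intro ballI impI)
  fix s t r :: real
  assume "s \<le> r" "r \<le> t"
  then have "\<alpha> * s \<le> \<alpha> * r \<or> \<alpha> * t \<le> \<alpha> * r"
    by (cases "0 \<le> \<alpha>") (auto intro: mult_left_mono mult_left_mono_neg)
  then show "min (\<alpha> * s + \<beta>) (\<alpha> * t + \<beta>) \<le> \<alpha> * r + \<beta>"
    by auto
qed

lemma quasiconcave_superlevel_eq_atLeastAtMost:
  assumes "continuous_on {a..b} F" "quasiconcave_on {a..b} F"
  obtains s t where "{\<tau> \<in> {a..b}. c \<le> F \<tau>} = {s..t}"
proof -
  let ?J = "{\<tau> \<in> {a..b}. c \<le> F \<tau>}"
  have "closed ?J"
    using continuous_on_closed_Collect_le[OF continuous_on_const assms(1)] by simp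
  moreover have "bounded ?J"
    by (rule bounded_subset[OF bounded_closed_interval]) auto
  ultimately have "compact ?J"
    by (simp add: compact_eq_bounded_closed)
  moreover have "is_interval ?J"
    unfolding is_interval_1
  proof (intro ballI allI impI, elim conjE)
    fix s t r assume s: "s \<in> ?J" and t: "t \<in> ?J" and "s \<le> r" "r \<le> t"
    then have "r \<in> {a..b}" by auto
    with s t \<open>s \<le> r\<close> \<open>r \<le> t\<close> have "min (F s) (F t) \<le> F r"
      using assms(2) unfolding quasiconcave_on_def by blast
    with s t \<open>r \<in> {a..b}\<close> show "r \<in> ?J" by auto
  qed
  ultimately show ?thesis
    using that connected_compact_interval_1 is_interval_connected_1 by metis
qed

lemma linepath_real_eq_affine:
  fixes a b :: real
  shows "linepath a b (\<tau> / l) = (b - a) / l * \<tau> + a"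
  by (simp add: linepath_def algebra_simps diff_divide_distrib)

lemma linepath_real_bounds:
  fixes a b :: real
  assumes "x \<in> {0..1}"
  shows "min a b \<le> linepath a b x" "linepath a b x \<le> max a b"
  using linepath_in_path[OF assms, of a b] by (auto simp: closed_segment_eq_real_ivl split: if_splits)

lemma sum_linepath:
  "(\<Sum>i\<in>I. linepath (a i) (b i) x) = linepath (\<Sum>i\<in>I. a i) (\<Sum>i\<in>I. b i) x"
  by (simp add: linepath_def sum.distrib scaleR_sum_right)

section \<open>Attaching an arc at a single point\<close>

lemma homotopic_with_canonI:
  fixes H :: "real \<times> 'a::topological_space \<Rightarrow> 'b::topological_space"
  assumes "continuous_on ({0..1} \<times> X) H" "H ` ({0..1} \<times> X) \<subseteq> Y"
    "\<And>x. H (0, x) = p x" "\<And>x. H (1, x) = q x"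
  shows "homotopic_with_canon (\<lambda>_. True) X Y p q"
proof -
  have "prod_topology (top_of_set {0..1::real}) (top_of_set X) = top_of_set ({0..1} \<times> X)"
    by (metis prod_topology_euclidean subtopology_Times)
  then show ?thesis
    unfolding homotopic_with_def using assms by (intro exI[of _ H]) auto
qed

lemma homotopic_arc_collapse_id:
  fixes K :: "'a::metric_space set" and h :: "real \<Rightarrow> 'a"
  assumes K: "closed K" and h: "continuous_on {a..b} h" "inj_on h {a..b}"
    and p: "p \<in> {a..b}" and KA: "K \<inter> h ` {a..b} = {h p}"
  shows "homotopic_with_canon (\<lambda>_. True) (K \<union> h ` {a..b}) (K \<union> h ` {a..b})
    (\<lambda>x. if x \<in> h ` {a..b} then h p else x) id"
proof -
  define A where "A = h ` {a..b}"
  define hi where "hi = the_inv_into {a..b} h"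
  define H where "H = (\<lambda>(s::real, x). if x \<in> A then h (s * hi x + (1 - s) * p) else x)"
  have "closed A"
    unfolding A_def using h(1) by (intro compact_imp_closed compact_continuous_image) auto
  have hi_cont: "continuous_on A hi"
    unfolding A_def hi_def using continuous_on_inv[OF h(1)] h(2) the_inv_into_f_f
    by (metis compact_Icc)
  have hi: "hi x \<in> {a..b}" "h (hi x) = x" if "x \<in> A" for x
    using that h(2) unfolding A_def hi_def by (auto simp: the_inv_into_f_f)
  have hi_p: "hi (h p) = p"
    using h(2) p unfolding hi_def by (simp add: the_inv_into_f_f)
  have K_A: "x = h p" if "x \<in> K" "x \<in> A" for x
    using that KA unfolding A_def by blast
  have between: "s * hi x + (1 - s) * p \<in> {a..b}" if "s \<in> {0..1}" "x \<in> A" for s x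
    using convexD[of "{a..b}" "hi x" p s "1 - s"] that hi(1) p by simp
  have "continuous_on ({0..1} \<times> K \<union> {0..1} \<times> A) H"
  proof (rule continuous_on_closed_Un)
    have "H z = snd z" if "z \<in> {0..1} \<times> K" for z
      using that K_A hi_p unfolding H_def by (auto simp: algebra_simps)
    then show "continuous_on ({0..1} \<times> K) H"
      using continuous_on_cong continuous_on_snd[OF continuous_on_id] by blast
    have "continuous_on ({0..1} \<times> A) (\<lambda>z. fst z * hi (snd z) + (1 - fst z) * p)"
      by (intro continuous_intros continuous_on_compose2[OF hi_cont]) auto
    then have "continuous_on ({0..1} \<times> A) (\<lambda>z. h (fst z * hi (snd z) + (1 - fst z) * p))"
      by (rule continuous_on_compose2[OF h(1)]) (use between in auto)
    then show "continuous_on ({0..1} \<times> A) H"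
      by (rule continuous_on_eq) (auto simp: H_def)
  qed (use K \<open>closed A\<close> in \<open>auto simp: closed_Times\<close>)
  then show ?thesis
    unfolding A_def[symmetric]
    by (intro homotopic_with_canonI[where H = H])
      (use between in \<open>auto simp: H_def hi Sigma_Un_distrib2 A_def\<close>)
qed

lemma contractible_Un_arc_iff:
  fixes K :: "'a::metric_space set" and h :: "real \<Rightarrow> 'a"
  assumes K: "closed K" and h: "continuous_on {a..b} h" "inj_on h {a..b}"
    and p: "p \<in> {a..b}" and KA: "K \<inter> h ` {a..b} = {h p}"
  shows "contractible (K \<union> h ` {a..b}) \<longleftrightarrow> contractible K"
proof -
  define A where "A = h ` {a..b}"
  define r where "r x = (if x \<in> A then h p else x)" for x
  have "closed A"
    unfolding A_def using h(1) by (intro compact_imp_closed compact_continuous_image) auto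
  have r_K: "r x = x" if "x \<in> K" for x
  proof (cases "x \<in> A")
    case True
    then have "x = h p"
      using that KA unfolding A_def by blast
    with True show ?thesis
      by (simp add: r_def)
  qed (simp add: r_def)
  have "continuous_on (K \<union> A) r"
  proof (rule continuous_on_closed_Un[OF K \<open>closed A\<close>])
    show "continuous_on K r"
      using continuous_on_id by (rule continuous_on_eq) (use r_K in auto)
    show "continuous_on A r"
      using continuous_on_const by (rule continuous_on_eq) (auto simp: r_def)
  qed
  then have "retraction_maps (top_of_set (K \<union> A)) (top_of_set K) r id"
    unfolding retraction_maps_def using KA r_K by (auto simp: r_def A_def)
  moreover have "homotopic_with_canon (\<lambda>_. True) (K \<union> A) (K \<union> A) r id"
    unfolding A_def r_def using homotopic_arc_collapse_id[OF assms] .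
  ultimately have "top_of_set (K \<union> A) homotopy_equivalent_space top_of_set K"
    using deformation_retract_imp_homotopy_equivalent_space by blast
  then show ?thesis
    unfolding A_def by (metis homotopy_equivalent_space_contractibility contractible_space_top_of_set)
qed

section \<open>Unimodal functions on finite metric trees\<close>

lemma unimodal_contractible_superlevel:
  assumes "unimodal S u" "0 < c" "x \<in> S" "c \<le> u x"
  shows "contractible {x \<in> S. c \<le> u x}"
proof -
  obtain M where "\<forall>c. 0 < c \<and> c \<le> M \<longrightarrow> contractible {x \<in> S. c \<le> u x}"
    "\<forall>c. M < c \<longrightarrow> {x \<in> S. c \<le> u x} = {}"
    using assms(1) unfolding unimodal_def by blast
  with assms(2-4) show ?thesis
    by (metis (mono_tags, lifting) empty_iff mem_Collect_eq not_le)
qed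

definition edge_override :: "real \<Rightarrow> (real \<Rightarrow> 'a) \<Rightarrow> (real \<Rightarrow> 'b) \<Rightarrow> ('a \<Rightarrow> 'b) \<Rightarrow> 'a \<Rightarrow> 'b" where
  "edge_override l g p w x = (if x \<in> g ` {0<..<l} then p (the_inv_into {0..l} g x) else w x)"

lemma edge_override_off_edge: "x \<notin> g ` {0<..<l} \<Longrightarrow> edge_override l g p w x = w x"
  by (simp add: edge_override_def)

definition edge_interpolation :: "real \<Rightarrow> (real \<Rightarrow> 'a) \<Rightarrow> ('a \<Rightarrow> real) \<Rightarrow> 'a \<Rightarrow> real" where
  "edge_interpolation l g u = edge_override l g (\<lambda>\<tau>. linepath (u (g 0)) (u (g l)) (\<tau> / l)) u"

lemma edge_interpolation_off_edge: "x \<notin> g ` {0<..<l} \<Longrightarrow> edge_interpolation l g u x = u x"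
  by (simp add: edge_interpolation_def edge_override_off_edge)

locale metric_tree =
  fixes S :: "'a::metric_space set" and V :: "'a set" and E :: "(real \<times> (real \<Rightarrow> 'a)) set"
  assumes finite_metric_tree: "finite_metric_tree S V E"
begin

lemma compact: "compact S"
  using finite_metric_tree unfolding finite_metric_tree_def by (elim conjE) assumption

lemma contractible: "contractible S"
  using finite_metric_tree unfolding finite_metric_tree_def by (elim conjE) assumption

lemma finite_V: "finite V"
  using finite_metric_tree unfolding finite_metric_tree_def by (elim conjE) assumption

lemma finite_E: "finite E"
  using finite_metric_tree unfolding finite_metric_tree_def by (elim conjE) assumption

lemma V_subset: "V \<subseteq> S"
  using finite_metric_tree unfolding finite_metric_tree_def by (elim conjE) assumption

lemma edges: "\<forall>(l, g) \<in> E. 0 < l \<and> continuous_on {0..l} g \<and> inj_on g {0..l} \<and>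
      g ` {0..l} \<subseteq> S \<and> g 0 \<in> V \<and> g l \<in> V \<and> g ` {0<..<l} \<inter> V = {}"
  using finite_metric_tree unfolding finite_metric_tree_def by (elim conjE) assumption

lemma open_edges_disjoint: "\<forall>e \<in> E. \<forall>e' \<in> E. e \<noteq> e' \<longrightarrow> open_edge e \<inter> open_edge e' = {}"
  using finite_metric_tree unfolding finite_metric_tree_def by (elim conjE) assumption

lemma S_eq: "S = V \<union> (\<Union>e \<in> E. open_edge e)"
  using finite_metric_tree unfolding finite_metric_tree_def by (elim conjE) assumption

lemma edge:
  assumes "(l, g) \<in> E"
  shows "0 < l" "continuous_on {0..l} g" "inj_on g {0..l}" "g ` {0..l} \<subseteq> S"
    "g 0 \<in> V" "g l \<in> V" "g ` {0<..<l} \<inter> V = {}"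
  using bspec[OF edges assms] by simp_all

lemma endpoints_notin_open_edge:
  assumes "(l, g) \<in> E"
  shows "g 0 \<notin> g ` {0<..<l}" "g l \<notin> g ` {0<..<l}"
  using edge(5,6,7)[OF assms] by blast+

lemma endpoints_in_Diff_open_edge:
  assumes "(l, g) \<in> E"
  shows "g 0 \<in> S - g ` {0<..<l}" "g l \<in> S - g ` {0<..<l}"
  using V_subset edge(5,6)[OF assms] endpoints_notin_open_edge[OF assms] by auto

lemma closed_edge_eq:
  assumes "(l, g) \<in> E"
  shows "g ` {0..l} = g ` {0<..<l} \<union> {g 0, g l}"
proof -
  have "{0..l} = {0<..<l} \<union> {0, l}"
    using edge(1)[OF assms] by auto
  then show ?thesis
    by simp
qed

lemma closed_edge_Diff_open_edge:
  assumes "(l, g) \<in> E"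
  shows "g ` {0..l} - g ` {0<..<l} = {g 0, g l}"
  unfolding closed_edge_eq[OF assms] using endpoints_notin_open_edge[OF assms] by auto

lemma closed_edge_Un_Diff_open_edge:
  assumes "(l, g) \<in> E"
  shows "g ` {0..l} \<union> (S - g ` {0<..<l}) = S"
  using edge(4)[OF assms] by auto

lemma compact_closed_edge:
  assumes "(l, g) \<in> E"
  shows "compact (g ` {0..l})"
  using edge(2)[OF assms] by (rule compact_continuous_image) simp

lemma closed_edge_disjoint_open_edge:
  assumes "(l, g) \<in> E" "(l', g') \<in> E" "(l', g') \<noteq> (l, g)"
  shows "g' ` {0..l'} \<inter> g ` {0<..<l} = {}"
proof -
  have "g' ` {0<..<l'} \<inter> g ` {0<..<l} = {}"
    using bspec[OF bspec[OF open_edges_disjoint assms(2)] assms(1)] assms(3)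
    by (simp add: open_edge_def)
  moreover have "g' 0 \<notin> g ` {0<..<l}" "g' l' \<notin> g ` {0<..<l}"
    using edge(5,6)[OF assms(2)] edge(7)[OF assms(1)] by blast+
  ultimately show ?thesis
    unfolding closed_edge_eq[OF assms(2)] by auto
qed

lemma closed_Diff_open_edge:
  assumes e: "(l, g) \<in> E"
  shows "closed (S - g ` {0<..<l})"
proof -
  let ?C = "\<Union>(l', g') \<in> E - {(l, g)}. g' ` {0..l'}"
  have "S - g ` {0<..<l} \<subseteq> V \<union> ?C"
  proof
    fix x assume x: "x \<in> S - g ` {0<..<l}"
    show "x \<in> V \<union> ?C"
    proof (cases "x \<in> V")
      case False
      then obtain l' g' where "(l', g') \<in> E" "x \<in> g' ` {0<..<l'}"
        using x S_eq by (auto simp: open_edge_def)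
      moreover have "(l', g') \<noteq> (l, g)"
        using x calculation(2) by auto
      moreover have "x \<in> g' ` {0..l'}"
        using calculation(2) by auto
      ultimately show ?thesis
        by (intro UnI2 UN_I[of "(l', g')"]) auto
    qed simp
  qed
  moreover have "V \<subseteq> S - g ` {0<..<l}"
    using V_subset edge(7)[OF e] by blast
  moreover have "g' ` {0..l'} \<subseteq> S - g ` {0<..<l}" if "(l', g') \<in> E - {(l, g)}" for l' g'
    using edge(4)[of l' g'] closed_edge_disjoint_open_edge[OF e, of l' g'] that by blast
  then have "?C \<subseteq> S - g ` {0<..<l}"
    by auto
  ultimately have "S - g ` {0<..<l} = V \<union> ?C"
    by blast
  moreover have "closed ?C"
    using finite_E compact_closed_edge by (intro closed_UN) (auto intro: compact_imp_closed)
  ultimately show ?thesis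
    using finite_V by (simp add: closed_Un finite_imp_closed)
qed

lemma continuous_on_edge_Un:
  assumes e: "(l, g) \<in> E"
    and "continuous_on (g ` {0..l}) w" "continuous_on (S - g ` {0<..<l}) w"
  shows "continuous_on S w"
proof -
  have "continuous_on (g ` {0..l} \<union> (S - g ` {0<..<l})) w"
    using compact_imp_closed[OF compact_closed_edge[OF e]] closed_Diff_open_edge[OF e] assms(2,3)
    by (rule continuous_on_closed_Un)
  then show ?thesis
    by (simp only: closed_edge_Un_Diff_open_edge[OF e])
qed

lemma edge_override_on_edge:
  assumes "(l, g) \<in> E" "\<tau> \<in> {0..l}" "p 0 = w (g 0)" "p l = w (g l)"
  shows "edge_override l g p w (g \<tau>) = p \<tau>"
proof (cases "\<tau> \<in> {0<..<l}")
  case True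
  then show ?thesis
    using the_inv_into_f_f[OF edge(3)[OF assms(1)] assms(2)] by (simp add: edge_override_def)
next
  case False
  then have "\<tau> = 0 \<or> \<tau> = l"
    using assms(2) by auto
  then show ?thesis
    using endpoints_notin_open_edge[OF assms(1)] assms(3,4) edge_override_off_edge by metis
qed

lemma continuous_on_edge_override:
  assumes e: "(l, g) \<in> E" and "continuous_on S w" "continuous_on {0..l} p"
    and "p 0 = w (g 0)" "p l = w (g l)"
  shows "continuous_on S (edge_override l g p w)"
proof (rule continuous_on_edge_Un[OF e])
  have inv: "the_inv_into {0..l} g (g \<tau>) = \<tau>" if "\<tau> \<in> {0..l}" for \<tau>
    using the_inv_into_f_f[OF edge(3)[OF e] that] .
  have "continuous_on (g ` {0..l}) (the_inv_into {0..l} g)"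
    by (rule continuous_on_inv[OF edge(2)[OF e] compact_Icc]) (simp add: inv)
  then have "continuous_on (g ` {0..l}) (\<lambda>x. p (the_inv_into {0..l} g x))"
    by (rule continuous_on_compose2[OF assms(3)]) (auto simp: inv)
  then show "continuous_on (g ` {0..l}) (edge_override l g p w)"
    by (rule continuous_on_eq) (auto simp: inv edge_override_on_edge[OF e _ assms(4,5)])
  show "continuous_on (S - g ` {0<..<l}) (edge_override l g p w)"
    using continuous_on_subset[OF assms(2)] by (rule continuous_on_eq) (auto simp: edge_override_off_edge)
qed

lemma norm_diff_ge_1_if_exp_eq_1:
  fixes z w :: complex
  assumes "exp z = 1" "exp w = 1" "z \<noteq> w"
  shows "1 \<le> norm (z - w)"
proof -
  have "exp (z - w) = 1"
    using assms by (simp add: exp_diff)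
  then obtain n :: int where n: "Re (z - w) = 0" "Im (z - w) = of_int (2 * n) * pi"
    unfolding exp_eq_1 by blast
  with assms(3) have "n \<noteq> 0"
    by (auto simp: complex_eq_iff)
  then have "1 * 1 \<le> \<bar>of_int (2 * n)\<bar> * pi"
    using pi_gt3 by (intro mult_mono) auto
  also have "\<dots> = \<bar>Im (z - w)\<bar>"
    using n by (simp add: abs_mult)
  also have "\<dots> \<le> norm (z - w)"
    by (rule abs_Im_le_cmod)
  finally show ?thesis by simp
qed

text \<open>The map \<open>\<rho>\<close> winds once around the circle along the edge and is \<open>1\<close> elsewhere, so its
  logarithm on the contractible tree increases by \<open>2\<pi>i\<close> along the edge.\<close>

lemma edge_winding_logarithm:
  assumes e: "(l, g) \<in> E"
  obtains \<theta> where "continuous_on S \<theta>" "\<And>x. x \<in> S - g ` {0<..<l} \<Longrightarrow> exp (\<theta> x) = 1"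
    "\<theta> (g l) = \<theta> (g 0) + 2 * pi * \<i>"
proof -
  define P where "P \<tau> = exp (2 * pi * \<i> * of_real (\<tau> / l))" for \<tau>
  define \<rho> where "\<rho> = edge_override l g P (\<lambda>_. 1)"
  have P_ends: "P 0 = 1" "P l = 1"
    using edge(1)[OF e] by (simp_all add: P_def)
  have \<rho>_edge: "\<rho> (g \<tau>) = P \<tau>" if "\<tau> \<in> {0..l}" for \<tau>
    unfolding \<rho>_def using P_ends by (intro edge_override_on_edge[OF e that]) simp_all
  have "continuous_on S \<rho>"
    unfolding \<rho>_def
    using edge(1)[OF e]
    by (intro continuous_on_edge_override[OF e]) (auto simp: P_def P_ends intro!: continuous_intros)
  moreover have "\<rho> x \<noteq> 0" for x
    by (simp add: \<rho>_def P_def edge_override_def)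
  ultimately obtain \<theta> where \<theta>: "continuous_on S \<theta>" "\<And>x. x \<in> S \<Longrightarrow> \<rho> x = exp (\<theta> x)"
    using continuous_logarithm_on_contractible_metric[OF _ contractible] by metis
  define k where "k \<tau> = \<theta> (g \<tau>) - 2 * pi * \<i> * of_real (\<tau> / l)" for \<tau>
  have exp_k: "exp (k \<tau>) = 1" if "\<tau> \<in> {0..l}" for \<tau>
  proof -
    have "g \<tau> \<in> S"
      using edge(4)[OF e] that by blast
    then show ?thesis
      using \<theta>(2)[of "g \<tau>"] \<rho>_edge[OF that] by (simp add: k_def P_def exp_diff)
  qed
  have "continuous_on {0..l} (\<lambda>\<tau>. \<theta> (g \<tau>))"
    using \<theta>(1) edge(2,4)[OF e] by (rule continuous_on_compose2)
  then have "continuous_on {0..l} k"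
    unfolding k_def using edge(1)[OF e] by (intro continuous_intros) auto
  then have "k constant_on {0..l}"
  proof (rule continuous_discrete_range_constant[rotated])
    show "\<exists>e>0. \<forall>y. y \<in> {0..l} \<and> k y \<noteq> k x \<longrightarrow> e \<le> norm (k y - k x)" if "x \<in> {0..l}" for x
      using exp_k norm_diff_ge_1_if_exp_eq_1 that by (intro exI[of _ 1]) auto
  qed simp
  then have "k l = k 0"
    using edge(1)[OF e] unfolding constant_on_def by auto
  then have \<theta>_l: "\<theta> (g l) = \<theta> (g 0) + 2 * pi * \<i>"
    using edge(1)[OF e] unfolding k_def by (simp add: algebra_simps)
  have exp_\<theta>: "exp (\<theta> x) = 1" if "x \<in> S - g ` {0<..<l}" for x
    using \<theta>(2)[of x] that by (simp add: \<rho>_def edge_override_off_edge)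
  show ?thesis
    using that \<theta>(1) exp_\<theta> \<theta>_l by blast
qed

text \<open>Off the open edge \<open>\<theta>\<close> takes values in the discrete set \<open>2\<pi>i\<int>\<close>.\<close>

lemma edge_separation:
  assumes e: "(l, g) \<in> E"
  obtains Q Q' where "closed Q" "closed Q'" "Q \<union> Q' = S - g ` {0<..<l}" "Q \<inter> Q' = {}"
    "g 0 \<in> Q" "g l \<in> Q'"
proof -
  obtain \<theta> where \<theta>: "continuous_on S \<theta>" and exp_\<theta>: "\<And>x. x \<in> S - g ` {0<..<l} \<Longrightarrow> exp (\<theta> x) = 1"
    and \<theta>_l: "\<theta> (g l) = \<theta> (g 0) + 2 * pi * \<i>"
    using edge_winding_logarithm[OF e] by blast
  note ends = endpoints_in_Diff_open_edge[OF e]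
  have "1 \<le> norm (2 * pi * \<i>)"
    using pi_gt3 by (simp add: norm_mult)
  then show ?thesis
  proof (intro that[of "{x \<in> S - g ` {0<..<l}. \<theta> x = \<theta> (g 0)}"
        "{x \<in> S - g ` {0<..<l}. 1 \<le> norm (\<theta> x - \<theta> (g 0))}"])
    show "closed {x \<in> S - g ` {0<..<l}. \<theta> x = \<theta> (g 0)}"
      using continuous_on_subset[OF \<theta>(1)] closed_Diff_open_edge[OF e]
      by (intro continuous_closed_preimage_constant) auto
    show "closed {x \<in> S - g ` {0<..<l}. 1 \<le> norm (\<theta> x - \<theta> (g 0))}"
      by (rule continuous_on_closed_Collect_le[OF continuous_on_const _ closed_Diff_open_edge[OF e]])
        (auto intro!: continuous_intros continuous_on_subset[OF \<theta>(1)])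
    show "{x \<in> S - g ` {0<..<l}. \<theta> x = \<theta> (g 0)} \<union> {x \<in> S - g ` {0<..<l}. 1 \<le> norm (\<theta> x - \<theta> (g 0))}
        = S - g ` {0<..<l}"
      using norm_diff_ge_1_if_exp_eq_1[OF exp_\<theta> exp_\<theta>[OF ends(1)]] by auto
  qed (use ends \<theta>_l in auto)
qed

lemma edge_point_separation:
  assumes e: "(l, g) \<in> E" and t: "0 < t" "t < l"
  obtains A B where "closed A" "closed B" "S \<subseteq> A \<union> B" "A \<inter> B \<subseteq> {g t}"
    "g ` {0..t} \<subseteq> A" "g ` {t..l} \<subseteq> B"
proof -
  obtain Q Q' where Q: "closed Q" "closed Q'" "Q \<union> Q' = S - g ` {0<..<l}" "Q \<inter> Q' = {}"
    "g 0 \<in> Q" "g l \<in> Q'"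
    using edge_separation[OF e] by blast
  have closed_arc: "closed (g ` {a..b})" if "0 \<le> a" "b \<le> l" for a b
    using continuous_on_subset[OF edge(2)[OF e]] that
    by (intro compact_imp_closed compact_continuous_image) auto
  have "{0..l} = {0..t} \<union> {t..l}"
    using t by auto
  then have cover: "S \<subseteq> (Q \<union> g ` {0..t}) \<union> (Q' \<union> g ` {t..l})"
    using closed_edge_Un_Diff_open_edge[OF e] Q(3) by (metis Un_assoc Un_commute image_Un eq_refl)
  have "g ` {t..l} \<inter> Q = {}"
  proof -
    have "{t..l} \<subseteq> {0<..<l} \<union> {l}"
      using t by auto
    then show ?thesis
      using Q(3,4,6) by blast
  qed
  moreover have "g ` {0..t} \<inter> Q' = {}"
  proof -
    have "{0..t} \<subseteq> {0<..<l} \<union> {0}"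
      using t by auto
    then show ?thesis
      using Q(3,4,5) by blast
  qed
  moreover have "g ` {0..t} \<inter> g ` {t..l} \<subseteq> {g t}"
  proof clarify
    fix \<sigma> \<tau> assume "\<sigma> \<in> {0..t}" "\<tau> \<in> {t..l}" "g \<sigma> = g \<tau>"
    with t have "\<sigma> = \<tau>"
      using inj_onD[OF edge(3)[OF e]] by auto
    with \<open>\<sigma> \<in> {0..t}\<close> \<open>\<tau> \<in> {t..l}\<close> show "g \<sigma> = g t"
      by auto
  qed
  ultimately have "(Q \<union> g ` {0..t}) \<inter> (Q' \<union> g ` {t..l}) \<subseteq> {g t}"
    using Q(4) by blast
  moreover have "closed (Q \<union> g ` {0..t})" "closed (Q' \<union> g ` {t..l})"
    using Q(1,2) closed_arc[of 0 t] closed_arc[of t l] t by auto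
  ultimately show ?thesis
    using that[of "Q \<union> g ` {0..t}" "Q' \<union> g ` {t..l}"] cover by blast
qed

lemma unimodal_quasiconcave_on_edge:
  assumes e: "(l, g) \<in> E" and u: "unimodal S u"
  shows "quasiconcave_on {0..l} (\<lambda>\<tau>. u (g \<tau>))"
  unfolding quasiconcave_on_def
proof (intro ballI impI, rule ccontr)
  fix s t r assume str: "s \<in> {0..l}" "t \<in> {0..l}" "r \<in> {0..l}" "s \<le> r" "r \<le> t"
    and dip: "\<not> min (u (g s)) (u (g t)) \<le> u (g r)"
  define c where "c = min (u (g s)) (u (g t))"
  define L where "L = {x \<in> S. c \<le> u x}"
  have in_S: "g \<tau> \<in> S" if "\<tau> \<in> {0..l}" for \<tau>
    using edge(4)[OF e] that by blast
  have "s < r" "r < t"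
    using str dip by (auto simp: le_less)
  with str obtain A B where AB: "closed A" "closed B" "S \<subseteq> A \<union> B" "A \<inter> B \<subseteq> {g r}"
    "g ` {0..r} \<subseteq> A" "g ` {r..l} \<subseteq> B"
    using edge_point_separation[OF e, of r] by auto
  have "0 \<le> u (g r)"
    using u in_S[OF str(3)] unfolding unimodal_def by blast
  then have "0 < c"
    using dip unfolding c_def by linarith
  then have "contractible L"
    unfolding L_def using unimodal_contractible_superlevel[OF u _ in_S[OF str(1)]]
    by (simp add: c_def)
  then have "connected L"
    by (rule contractible_imp_connected_set)
  moreover have "g s \<in> A \<inter> L" "g t \<in> B \<inter> L" "g r \<notin> L"
    using AB(5,6) str in_S dip unfolding L_def c_def by auto
  ultimately show False
    using AB(1-4) unfolding connected_closed L_def by blast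
qed

lemma edge_interpolation_on_edge:
  assumes e: "(l, g) \<in> E" and "\<tau> \<in> {0..l}"
  shows "edge_interpolation l g u (g \<tau>) = linepath (u (g 0)) (u (g l)) (\<tau> / l)"
  unfolding edge_interpolation_def using edge(1)[OF e]
  by (intro edge_override_on_edge[OF e assms(2)]) (simp_all add: linepath_0' linepath_1')

lemma edge_interpolation_bounds:
  assumes e: "(l, g) \<in> E" and "x \<in> g ` {0..l}"
  shows "min (u (g 0)) (u (g l)) \<le> edge_interpolation l g u x"
    "edge_interpolation l g u x \<le> max (u (g 0)) (u (g l))"
proof -
  obtain \<tau> where "\<tau> \<in> {0..l}" "x = g \<tau>"
    using assms(2) by blast
  moreover have "\<tau> / l \<in> {0..1}" if "\<tau> \<in> {0..l}" for \<tau>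
    using that edge(1)[OF e] by auto
  ultimately show "min (u (g 0)) (u (g l)) \<le> edge_interpolation l g u x"
    "edge_interpolation l g u x \<le> max (u (g 0)) (u (g l))"
    using edge_interpolation_on_edge[OF e] linepath_real_bounds by auto
qed

lemma continuous_on_edge_interpolation:
  assumes e: "(l, g) \<in> E" and "continuous_on S u"
  shows "continuous_on S (edge_interpolation l g u)"
  unfolding edge_interpolation_def using edge(1)[OF e]
  by (intro continuous_on_edge_override[OF e assms(2)])
    (auto simp: linepath_def intro!: continuous_intros)

lemma edge_interpolation_endpoints:
  assumes e: "(l, g) \<in> E"
  shows "edge_interpolation l g u (g 0) = u (g 0)" "edge_interpolation l g u (g l) = u (g l)"
  using edge_interpolation_on_edge[OF e, of 0 u] edge_interpolation_on_edge[OF e, of l u] edge(1)[OF e]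
  by (simp_all add: linepath_0' linepath_1')

lemma quasiconcave_on_edge_interpolation:
  assumes e: "(l, g) \<in> E"
  shows "quasiconcave_on {0..l} (\<lambda>\<tau>. edge_interpolation l g u (g \<tau>))"
proof -
  have "quasiconcave_on {0..l} (\<lambda>\<tau>. edge_interpolation l g u (g \<tau>)) \<longleftrightarrow>
      quasiconcave_on {0..l} (\<lambda>\<tau>. (u (g l) - u (g 0)) / l * \<tau> + u (g 0))"
    by (rule quasiconcave_on_cong) (simp add: edge_interpolation_on_edge[OF e] linepath_real_eq_affine)
  then show ?thesis
    using quasiconcave_on_affine by blast
qed

lemma edge_interpolation_superlevel_eq_Diff_open_edge:
  assumes e: "(l, g) \<in> E" and "u (g 0) < c" "u (g l) < c"
  shows "{x \<in> S. c \<le> edge_interpolation l g u x} = {x \<in> S - g ` {0<..<l}. c \<le> edge_interpolation l g u x}"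
proof -
  have "x \<notin> g ` {0<..<l}" if "c \<le> edge_interpolation l g u x" for x
  proof
    assume "x \<in> g ` {0<..<l}"
    then have "x \<in> g ` {0..l}"
      by auto
    then show False
      using edge_interpolation_bounds(2)[OF e, of x u] assms(2,3) that by linarith
  qed
  then show ?thesis
    by blast
qed

lemma superlevel_eq_Un_closed_edge:
  fixes w :: "'a \<Rightarrow> real"
  assumes e: "(l, g) \<in> E" and qc: "quasiconcave_on {0..l} (\<lambda>\<tau>. w (g \<tau>))"
    and "c \<le> w (g 0)" "c \<le> w (g l)"
  shows "{x \<in> S. c \<le> w x} = {x \<in> S - g ` {0<..<l}. c \<le> w x} \<union> g ` {0..l}"
proof -
  have "min (w (g 0)) (w (g l)) \<le> w (g \<tau>)" if "\<tau> \<in> {0..l}" for \<tau>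
    using qc that edge(1)[OF e] unfolding quasiconcave_on_def by auto
  then have "c \<le> w (g \<tau>)" if "\<tau> \<in> {0..l}" for \<tau>
    using that assms(3,4) by fastforce
  then have "g ` {0..l} \<subseteq> {x \<in> S. c \<le> w x}"
    using edge(4)[OF e] by auto
  moreover have "g ` {0<..<l} \<subseteq> g ` {0..l}"
    by (rule image_mono) auto
  ultimately show ?thesis
    by blast
qed

lemma contractible_superlevel_iff_Diff_open_edge:
  fixes w :: "'a \<Rightarrow> real"
  assumes e: "(l, g) \<in> E" and "continuous_on S w" and qc: "quasiconcave_on {0..l} (\<lambda>\<tau>. w (g \<tau>))"
    and one_end: "c \<le> w (g 0) \<longleftrightarrow> w (g l) < c"
  shows "contractible {x \<in> S. c \<le> w x} \<longleftrightarrow> contractible {x \<in> S - g ` {0<..<l}. c \<le> w x}"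
proof -
  define K where "K = {x \<in> S - g ` {0<..<l}. c \<le> w x}"
  define p where "p = (if c \<le> w (g 0) then 0 else l)"
  have "continuous_on (S - g ` {0<..<l}) w"
    using assms(2) by (rule continuous_on_subset) blast
  then have "closed K"
    unfolding K_def using continuous_on_closed_Collect_le[OF continuous_on_const _ closed_Diff_open_edge[OF e]]
    by blast
  have "continuous_on {0..l} (\<lambda>\<tau>. w (g \<tau>))"
    using assms(2) edge(2,4)[OF e] by (rule continuous_on_compose2)
  then obtain s t where st: "{\<tau> \<in> {0..l}. c \<le> w (g \<tau>)} = {s..t}"
    using quasiconcave_superlevel_eq_atLeastAtMost[OF _ qc] by blast
  have "p \<in> {\<tau> \<in> {0..l}. c \<le> w (g \<tau>)}"
    using one_end edge(1)[OF e] unfolding p_def by (cases "c \<le> w (g 0)") auto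
  then have p: "p \<in> {s..t}"
    unfolding st .
  have "{s..t} \<subseteq> {0..l}"
    unfolding st[symmetric] by auto
  then have arc: "continuous_on {s..t} g" "inj_on g {s..t}"
    using continuous_on_subset[OF edge(2)[OF e]] inj_on_subset[OF edge(3)[OF e]] by auto
  have "{x \<in> S. c \<le> w x} = K \<union> {x \<in> g ` {0..l}. c \<le> w x}"
    unfolding K_def using edge(4)[OF e] by auto
  also have "{x \<in> g ` {0..l}. c \<le> w x} = g ` {\<tau> \<in> {0..l}. c \<le> w (g \<tau>)}"
    by auto
  also have "\<dots> = g ` {s..t}"
    unfolding st ..
  finally have superlevel: "{x \<in> S. c \<le> w x} = K \<union> g ` {s..t}" .
  have "K \<inter> g ` {s..t} = {g p}"
  proof
    show "K \<inter> g ` {s..t} \<subseteq> {g p}"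
    proof clarify
      fix \<tau> assume "g \<tau> \<in> K" "\<tau> \<in> {s..t}"
      then have "\<tau> \<in> {0..l}" "c \<le> w (g \<tau>)" "\<tau> \<notin> {0<..<l}"
        using st unfolding K_def by auto
      then have "\<tau> = 0 \<and> c \<le> w (g 0) \<or> \<tau> = l \<and> c \<le> w (g l)"
        by auto
      then show "g \<tau> = g p"
        using one_end unfolding p_def by auto
    qed
    have "g p \<in> S - g ` {0<..<l}"
      using endpoints_in_Diff_open_edge[OF e] unfolding p_def by auto
    then show "{g p} \<subseteq> K \<inter> g ` {s..t}"
      using p \<open>p \<in> {\<tau> \<in> {0..l}. c \<le> w (g \<tau>)}\<close> unfolding K_def by auto
  qed
  then show ?thesis
    unfolding superlevel K_def[symmetric] by (rule contractible_Un_arc_iff[OF \<open>closed K\<close> arc p])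
qed

lemma superlevel_eq_Diff_open_edge:
  fixes w :: "'a \<Rightarrow> real"
  assumes e: "(l, g) \<in> E" and conn: "connected {x \<in> S. c \<le> w x}"
    and "w (g 0) < c" "w (g l) < c" and x0: "x0 \<in> S - g ` {0<..<l}" "c \<le> w x0"
  shows "{x \<in> S. c \<le> w x} = {x \<in> S - g ` {0<..<l}. c \<le> w x}"
proof -
  define L where "L = {x \<in> S. c \<le> w x}"
  have "L \<inter> (g ` {0..l} - g ` {0<..<l}) = {}"
    unfolding closed_edge_Diff_open_edge[OF e] L_def using assms(3,4) by auto
  then have "g ` {0..l} \<inter> (S - g ` {0<..<l}) \<inter> L = {}"
    by blast
  moreover have "L \<subseteq> g ` {0..l} \<union> (S - g ` {0<..<l})"
    unfolding L_def using closed_edge_Un_Diff_open_edge[OF e] by blast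
  moreover have "(S - g ` {0<..<l}) \<inter> L \<noteq> {}"
    using x0 unfolding L_def by blast
  ultimately have "g ` {0..l} \<inter> L = {}"
    using connected_closedD[OF conn[folded L_def] _ _ compact_imp_closed[OF compact_closed_edge[OF e]]
        closed_Diff_open_edge[OF e]] by blast
  moreover have "g ` {0<..<l} \<subseteq> g ` {0..l}"
    by (rule image_mono) auto
  ultimately show ?thesis
    unfolding L_def by blast
qed

lemma contractible_superlevel_edge_interpolation:
  assumes e: "(l, g) \<in> E" and u: "unimodal S u" and "0 < c"
    and x0: "x0 \<in> S - g ` {0<..<l}" "c \<le> u x0"
  shows "contractible {x \<in> S. c \<le> edge_interpolation l g u x}"
proof -
  define v where "v = edge_interpolation l g u"
  have u_cont: "continuous_on S u"
    using u unfolding unimodal_def by blast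
  then have v_cont: "continuous_on S v"
    unfolding v_def by (rule continuous_on_edge_interpolation[OF e])
  have u_super: "contractible {x \<in> S. c \<le> u x}"
    using unimodal_contractible_superlevel[OF u \<open>0 < c\<close>] x0 by blast
  have u_qc: "quasiconcave_on {0..l} (\<lambda>\<tau>. u (g \<tau>))"
    by (rule unimodal_quasiconcave_on_edge[OF e u])
  have v_qc: "quasiconcave_on {0..l} (\<lambda>\<tau>. v (g \<tau>))"
    unfolding v_def by (rule quasiconcave_on_edge_interpolation[OF e])
  have v_ends: "v (g 0) = u (g 0)" "v (g l) = u (g l)"
    unfolding v_def by (rule edge_interpolation_endpoints[OF e])+
  have off_edge: "{x \<in> S - g ` {0<..<l}. c \<le> v x} = {x \<in> S - g ` {0<..<l}. c \<le> u x}"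
    unfolding v_def by (auto simp: edge_interpolation_off_edge)
  consider (both) "c \<le> u (g 0)" "c \<le> u (g l)" | (one) "c \<le> u (g 0) \<longleftrightarrow> u (g l) < c"
    | (none) "u (g 0) < c" "u (g l) < c"
    by (cases "c \<le> u (g 0)"; cases "c \<le> u (g l)") auto
  then have "contractible {x \<in> S. c \<le> v x}"
  proof cases
    case both
    have "{x \<in> S. c \<le> v x} = {x \<in> S - g ` {0<..<l}. c \<le> v x} \<union> g ` {0..l}"
      by (rule superlevel_eq_Un_closed_edge[OF e v_qc]) (use both v_ends in simp_all)
    also have "\<dots> = {x \<in> S - g ` {0<..<l}. c \<le> u x} \<union> g ` {0..l}"
      by (simp only: off_edge)
    also have "\<dots> = {x \<in> S. c \<le> u x}"
      by (rule superlevel_eq_Un_closed_edge[OF e u_qc both, symmetric])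
    finally show ?thesis
      using u_super by simp
  next
    case one
    have "contractible {x \<in> S. c \<le> v x} \<longleftrightarrow> contractible {x \<in> S - g ` {0<..<l}. c \<le> v x}"
      by (rule contractible_superlevel_iff_Diff_open_edge[OF e v_cont v_qc]) (use one v_ends in simp)
    also have "\<dots> \<longleftrightarrow> contractible {x \<in> S - g ` {0<..<l}. c \<le> u x}"
      by (simp only: off_edge)
    also have "\<dots> \<longleftrightarrow> contractible {x \<in> S. c \<le> u x}"
      by (rule contractible_superlevel_iff_Diff_open_edge[OF e u_cont u_qc one, symmetric])
    finally show ?thesis
      using u_super by simp
  next
    case none
    have "{x \<in> S. c \<le> u x} = {x \<in> S - g ` {0<..<l}. c \<le> u x}"
      using superlevel_eq_Diff_open_edge[OF e contractible_imp_connected_set[OF u_super] none x0] .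
    moreover have "{x \<in> S. c \<le> v x} = {x \<in> S - g ` {0<..<l}. c \<le> v x}"
      unfolding v_def by (rule edge_interpolation_superlevel_eq_Diff_open_edge[OF e none])
    ultimately show ?thesis
      using u_super off_edge by simp
  qed
  then show ?thesis
    unfolding v_def .
qed

lemma edge_interpolation_le:
  assumes e: "(l, g) \<in> E" and "x \<in> S" and le: "\<And>y. y \<in> S - g ` {0<..<l} \<Longrightarrow> u y \<le> M"
  shows "edge_interpolation l g u x \<le> M"
proof (cases "x \<in> g ` {0<..<l}")
  case True
  then have "edge_interpolation l g u x \<le> max (u (g 0)) (u (g l))"
    by (intro edge_interpolation_bounds(2)[OF e]) auto
  moreover have "max (u (g 0)) (u (g l)) \<le> M"
    using le endpoints_in_Diff_open_edge[OF e] by simp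
  ultimately show ?thesis
    by (rule order.trans)
next
  case False
  then show ?thesis
    using le \<open>x \<in> S\<close> by (simp add: edge_interpolation_off_edge)
qed

lemma edge_interpolation_nonneg:
  assumes e: "(l, g) \<in> E" and "x \<in> S" and nonneg: "\<And>y. y \<in> S \<Longrightarrow> 0 \<le> u y"
  shows "0 \<le> edge_interpolation l g u x"
proof (cases "x \<in> g ` {0<..<l}")
  case True
  then have "min (u (g 0)) (u (g l)) \<le> edge_interpolation l g u x"
    by (intro edge_interpolation_bounds(1)[OF e]) auto
  moreover have "0 \<le> min (u (g 0)) (u (g l))"
    using nonneg endpoints_in_Diff_open_edge[OF e] by simp
  ultimately show ?thesis
    by (rule order.trans[rotated])
next
  case False
  then show ?thesis
    using nonneg \<open>x \<in> S\<close> by (simp add: edge_interpolation_off_edge)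
qed

lemma unimodal_edge_interpolation:
  assumes e: "(l, g) \<in> E" and u: "unimodal S u"
  shows "unimodal S (edge_interpolation l g u)"
proof -
  define v where "v = edge_interpolation l g u"
  have u_cont: "continuous_on S u" and u_nonneg: "\<And>x. x \<in> S \<Longrightarrow> 0 \<le> u x"
    using u unfolding unimodal_def by blast+
  have "S \<inter> (S - g ` {0<..<l}) = S - g ` {0<..<l}"
    by blast
  then have "compact (S - g ` {0<..<l})"
    using compact_Int_closed[OF compact closed_Diff_open_edge[OF e]] by simp
  moreover have "S - g ` {0<..<l} \<noteq> {}"
    using endpoints_in_Diff_open_edge[OF e] by blast
  moreover have "continuous_on (S - g ` {0<..<l}) u"
    using u_cont by (rule continuous_on_subset) blast
  ultimately obtain x0 where x0: "x0 \<in> S - g ` {0<..<l}" "\<And>y. y \<in> S - g ` {0<..<l} \<Longrightarrow> u y \<le> u x0"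
    using continuous_attains_sup[of "S - g ` {0<..<l}" u] by blast
  have v_le: "v x \<le> u x0" if "x \<in> S" for x
    unfolding v_def using edge_interpolation_le[OF e that x0(2)] .
  have "unimodal S v"
    unfolding unimodal_def
  proof (intro conjI exI[of _ "u x0"])
    show "continuous_on S v"
      unfolding v_def by (rule continuous_on_edge_interpolation[OF e u_cont])
    show "\<forall>x\<in>S. 0 \<le> v x"
      unfolding v_def using edge_interpolation_nonneg[OF e _ u_nonneg] by simp
    show "\<forall>x\<in>S. v x \<le> u x0"
      using v_le by blast
    have "v x0 = u x0"
      using x0(1) unfolding v_def by (simp add: edge_interpolation_off_edge)
    then show "\<exists>x\<in>S. v x = u x0"
      using x0(1) by blast
    show "\<forall>c. 0 < c \<and> c \<le> u x0 \<longrightarrow> contractible {x \<in> S. c \<le> v x}"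
      unfolding v_def using contractible_superlevel_edge_interpolation[OF e u _ x0(1)] by blast
    show "\<forall>c. u x0 < c \<longrightarrow> {x \<in> S. c \<le> v x} = {}"
      using v_le by fastforce
  qed
  then show ?thesis
    unfolding v_def .
qed

lemma unimodal_decomposition_edge_interpolation:
  assumes e: "(l, g) \<in> E" and f: "\<forall>\<tau>\<in>{0..l}. f (g \<tau>) = \<alpha> * \<tau> + \<beta>"
    and ud: "unimodal_decomposition S f n us"
  shows "unimodal_decomposition S f n (\<lambda>i. edge_interpolation l g (us i))"
  unfolding unimodal_decomposition_def
proof (intro conjI allI impI ballI)
  show "unimodal S (edge_interpolation l g (us i))" if "i < n" for i
    using ud that unimodal_edge_interpolation[OF e] unfolding unimodal_decomposition_def by blast
  have sum: "f x = (\<Sum>i<n. us i x)" if "x \<in> S" for x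
    using ud that unfolding unimodal_decomposition_def by blast
  fix x assume "x \<in> S"
  show "f x = (\<Sum>i<n. edge_interpolation l g (us i) x)"
  proof (cases "x \<in> g ` {0<..<l}")
    case True
    then obtain \<tau> where "\<tau> \<in> {0<..<l}" "x = g \<tau>"
      by blast
    then have \<tau>: "\<tau> \<in> {0..l}" "x = g \<tau>"
      by auto
    have ends: "g 0 \<in> S" "g l \<in> S"
      using edge(1,4)[OF e] by auto
    have "(\<Sum>i<n. edge_interpolation l g (us i) x)
        = (\<Sum>i<n. linepath (us i (g 0)) (us i (g l)) (\<tau> / l))"
      using edge_interpolation_on_edge[OF e \<tau>(1)] \<tau>(2) by simp
    also have "\<dots> = linepath (f (g 0)) (f (g l)) (\<tau> / l)"
      unfolding sum_linepath sum[OF ends(1)] sum[OF ends(2)] ..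
    also have "\<dots> = \<alpha> * \<tau> + \<beta>"
      using f edge(1)[OF e] by (simp add: linepath_real_eq_affine)
    finally show ?thesis
      using f \<tau> by simp
  next
    case False
    then show ?thesis
      using sum[OF \<open>x \<in> S\<close>] by (simp add: edge_interpolation_off_edge)
  qed
qed

lemma edge_linear_edge_interpolation:
  assumes e: "(l, g) \<in> E" and "F \<subseteq> E" "edge_linear F u"
  shows "edge_linear (insert (l, g) F) (edge_interpolation l g u)"
  unfolding edge_linear_def
proof (intro ballI, clarify)
  fix l' g' assume e': "(l', g') \<in> insert (l, g) F"
  show "\<exists>\<alpha> \<beta>. \<forall>\<tau>\<in>{0..l'}. edge_interpolation l g u (g' \<tau>) = \<alpha> * \<tau> + \<beta>"
  proof (cases "(l', g') = (l, g)")
    case True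
    have "\<forall>\<tau>\<in>{0..l}. edge_interpolation l g u (g \<tau>) = (u (g l) - u (g 0)) / l * \<tau> + u (g 0)"
      using edge_interpolation_on_edge[OF e] by (simp add: linepath_real_eq_affine)
    with True show ?thesis
      by blast
  next
    case False
    then have "(l', g') \<in> F"
      using e' by auto
    then obtain \<alpha> \<beta> where ab: "\<forall>\<tau>\<in>{0..l'}. u (g' \<tau>) = \<alpha> * \<tau> + \<beta>"
      using assms(3) unfolding edge_linear_def by fastforce
    have "g' ` {0..l'} \<inter> g ` {0<..<l} = {}"
      using closed_edge_disjoint_open_edge[OF e _ False] \<open>(l', g') \<in> F\<close> assms(2) by blast
    then have "g' \<tau> \<notin> g ` {0<..<l}" if "\<tau> \<in> {0..l'}" for \<tau>
      using that by blast
    then have "\<forall>\<tau>\<in>{0..l'}. edge_interpolation l g u (g' \<tau>) = \<alpha> * \<tau> + \<beta>"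
      using ab by (simp add: edge_interpolation_off_edge)
    then show ?thesis
      by blast
  qed
qed

lemma unimodal_decomposition_edge_linear:
  assumes f: "edge_linear E f" and ud: "unimodal_decomposition S f n us"
  shows "\<exists>vs. unimodal_decomposition S f n vs \<and> (\<forall>i<n. edge_linear E (vs i))"
proof -
  have "\<exists>vs. unimodal_decomposition S f n vs \<and> (\<forall>i<n. edge_linear F (vs i))" if "F \<subseteq> E" for F
    using finite_subset[OF that finite_E] that
  proof (induction F)
    case empty
    then show ?case
      using ud by (auto simp: edge_linear_def)
  next
    case (insert e F)
    then obtain vs where vs: "unimodal_decomposition S f n vs" "\<forall>i<n. edge_linear F (vs i)"
      by auto
    obtain l g where lg: "e = (l, g)"
      by fastforce
    with insert.prems have e: "(l, g) \<in> E" and "F \<subseteq> E"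
      by auto
    obtain \<alpha> \<beta> where ab: "\<forall>\<tau>\<in>{0..l}. f (g \<tau>) = \<alpha> * \<tau> + \<beta>"
      using f e unfolding edge_linear_def by fastforce
    have "unimodal_decomposition S f n (\<lambda>i. edge_interpolation l g (vs i))"
      by (rule unimodal_decomposition_edge_interpolation[OF e ab vs(1)])
    moreover have "edge_linear (insert e F) (edge_interpolation l g (vs i))" if "i < n" for i
      unfolding lg using edge_linear_edge_interpolation[OF e \<open>F \<subseteq> E\<close>] vs(2) that by blast
    ultimately show ?case
      by blast
  qed
  from this[OF order_refl] show ?thesis .
qed

lemma vertices_nonempty:
  assumes "S \<noteq> {}"
  shows "V \<noteq> {}"
proof
  assume "V = {}"
  with S_eq assms obtain e where "e \<in> E"
    by blast
  moreover obtain l g where "e = (l, g)"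
    by fastforce
  ultimately show False
    using edge(5) \<open>V = {}\<close> by blast
qed

lemma edge_linear_le_max_endpoints:
  assumes w: "edge_linear E w" and e: "(l, g) \<in> E" and \<tau>: "\<tau> \<in> {0..l}"
  shows "w (g \<tau>) \<le> max (w (g 0)) (w (g l))"
proof -
  obtain \<alpha> \<beta> where ab: "\<forall>\<tau>\<in>{0..l}. w (g \<tau>) = \<alpha> * \<tau> + \<beta>"
    using w e unfolding edge_linear_def by fastforce
  have "\<tau> / l \<in> {0..1}"
    using \<tau> edge(1)[OF e] by auto
  then have "linepath \<beta> (\<alpha> * l + \<beta>) (\<tau> / l) \<le> max \<beta> (\<alpha> * l + \<beta>)"
    by (rule linepath_real_bounds)
  then show ?thesis
    using ab \<tau> edge(1)[OF e] by (simp add: linepath_real_eq_affine)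
qed

lemma edge_linear_max_at_vertex:
  assumes w: "edge_linear E w" and "S \<noteq> {}"
  shows "\<exists>v\<in>V. \<forall>x\<in>S. w x \<le> w v"
proof -
  have "Max (w ` V) \<in> w ` V"
    using finite_V vertices_nonempty[OF \<open>S \<noteq> {}\<close>] by simp
  then obtain v where v: "v \<in> V" "w v = Max (w ` V)"
    by (metis imageE)
  then have v_max: "w y \<le> w v" if "y \<in> V" for y
    using finite_V that by simp
  have "w x \<le> w v" if "x \<in> S" for x
  proof (cases "x \<in> V")
    case False
    then obtain l g \<tau> where e: "(l, g) \<in> E" and "\<tau> \<in> {0<..<l}" "x = g \<tau>"
      using S_eq \<open>x \<in> S\<close> by (auto simp: open_edge_def)
    then have "w x \<le> max (w (g 0)) (w (g l))"
      using edge_linear_le_max_endpoints[OF w e, of \<tau>] by simp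
    moreover have "w (g 0) \<le> w v" "w (g l) \<le> w v"
      using v_max edge(5,6)[OF e] by blast+
    ultimately show ?thesis
      by linarith
  qed (use v_max in auto)
  then show ?thesis
    using v(1) by blast
qed

end

theorem lemma2p3:
  fixes S :: "'a::metric_space set" and V :: "'a set"
    and E :: "(real \<times> (real \<Rightarrow> 'a)) set"
    and f :: "'a \<Rightarrow> real" and n :: nat and us :: "nat \<Rightarrow> 'a \<Rightarrow> real"
  assumes "finite_metric_tree S V E"
    and "continuous_on S f" and "\<forall>x \<in> S. 0 \<le> f x"
    and "edge_linear E f"
    and "unimodal_decomposition S f n us"
  shows "\<exists>vs. unimodal_decomposition S f n vs \<and>
           (\<forall>i < n. \<exists>v \<in> V. \<forall>x \<in> S. vs i x \<le> vs i v)"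
proof -
  \<comment> \<open>Continuity and nonnegativity of \<open>f\<close> are implied by the decomposition and not needed.\<close>
  interpret metric_tree S V E
    by (rule metric_tree.intro) (rule assms(1))
  obtain vs where vs: "unimodal_decomposition S f n vs" "\<And>i. i < n \<Longrightarrow> edge_linear E (vs i)"
    using unimodal_decomposition_edge_linear[OF assms(4,5)] by blast
  have "\<exists>v \<in> V. \<forall>x \<in> S. vs i x \<le> vs i v" if "i < n" for i
  proof (rule edge_linear_max_at_vertex[OF vs(2)[OF that]])
    show "S \<noteq> {}"
      using vs(1) that unfolding unimodal_decomposition_def unimodal_def by blast
  qed
  with vs(1) show ?thesis
    by blast
qed

end
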